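(* Let $\mathcal{H}$ be a finite-dimensional Hilbert space and $\rho_1,\rho_2\in\mathcal{D}^\le(\mathcal{H})$. The following are equivalent: (1) $\rho_1=\rho_2$; (2) there exists an orthonormal basis $\mathcal{B}$ of $\mathcal{H}$ such that $\rho_1\,(=_\mathcal{B})^\#\,\rho_2$; (3) $\rho_1\,(=_{\mathit{sym}})^\#\,\rho_2$.
   Context: $\mathcal{D}^\le(\mathcal{H})$ is the set of partial density operators (positive, trace $\le 1$). For $\rho\in\mathcal{D}^\le(\mathcal{H}_1\otimes\mathcal{H}_2)$, $\rho$ is a coupling for $\langle\rho_1,\rho_2\rangle$ if $\mathrm{tr}_2(\rho)=\rho_1$ and $\mathrm{tr}_1(\rho)=\rho_2$ (partial traces over the second, resp. first, factor). The support $\mathrm{supp}(\rho)$ is the span of eigenvectors of $\rho$ with nonzero eigenvalues. For a closed subspace $\mathcal{X}$ of $\mathcal{H}_1\otimes\mathcal{H}_2$, we write $\rho_1\,\mathcal{X}^\#\,\rho_2$ (a lifting) if there exists a witness $\rho\in\mathcal{D}^\le(\mathcal{H}_1\otimes\mathcal{H}_2)$, i.e. a coupling $\rho$ for $\langle\rho_1,\rho_2\rangle$ with $\mathrm{supp}(\rho)\subseteq\mathcal{X}$. For an orthonormal basis $\mathcal{B}=\{|i\rangle\}$ of $\mathcal{H}$, $(=_\mathcal{B})$ is the subspace $\mathrm{span}\{|i\rangle|i\rangle\}$ of $\mathcal{H}\otimes\mathcal{H}$. $(=_{\mathit{sym}})$ is the symmetric subspace of $\mathcal{H}\otimes\mathcal{H}$,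 i.e. the range of the projection $\frac12(I\otimes I+S)$, where $S$ is the swap operator $S|\varphi,\psi\rangle=|\psi,\varphi\rangle$. *)

theory Defs
  imports "Jordan_Normal_Form.Schur_Decomposition"
begin

text \<open>Finite-dimensional Hilbert space H = C^n, vectors are complex vec of dimension n,
  operators are complex n x n matrices. The tensor product C^n1 (x) C^n2 is C^(n1*n2),
  where the basis vector |i>|j> is the standard basis vector with index i*n2+j.\<close>

definition mtrace :: "complex mat \<Rightarrow> complex" where
  "mtrace A = (\<Sum>i<dim_row A. A $$ (i, i))"

definition positive_op :: "nat \<Rightarrow> complex mat \<Rightarrow> bool" where
  "positive_op n A \<longleftrightarrow> A \<in> carrier_mat n n \<and>
     (\<forall>v \<in> carrier_vec n. Im ((A *\<^sub>v v) \<bullet>c v) = 0 \<and> Re ((A *\<^sub>v v) \<bullet>c v) \<ge> 0)"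

definition pdo :: "nat \<Rightarrow> complex mat \<Rightarrow> bool" where
  "pdo n \<rho> \<longleftrightarrow> positive_op n \<rho> \<and> Re (mtrace \<rho>) \<le> 1"

text \<open>partial traces on C^n1 (x) C^n2: tr_2 traces out the second factor, tr_1 the first\<close>
definition ptrace2 :: "nat \<Rightarrow> nat \<Rightarrow> complex mat \<Rightarrow> complex mat" where
  "ptrace2 n1 n2 \<rho> = mat n1 n1 (\<lambda>(i, k). \<Sum>j<n2. \<rho> $$ (i * n2 + j, k * n2 + j))"

definition ptrace1 :: "nat \<Rightarrow> nat \<Rightarrow> complex mat \<Rightarrow> complex mat" where
  "ptrace1 n1 n2 \<rho> = mat n2 n2 (\<lambda>(j, l). \<Sum>i<n1. \<rho> $$ (i * n2 + j, i * n2 + l))"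

definition coupling :: "nat \<Rightarrow> nat \<Rightarrow> complex mat \<Rightarrow> complex mat \<Rightarrow> complex mat \<Rightarrow> bool" where
  "coupling n1 n2 \<rho> \<rho>1 \<rho>2 \<longleftrightarrow> ptrace2 n1 n2 \<rho> = \<rho>1 \<and> ptrace1 n1 n2 \<rho> = \<rho>2"

definition cspan :: "nat \<Rightarrow> complex vec set \<Rightarrow> complex vec set" where
  "cspan n S = {v \<in> carrier_vec n. \<exists>(vs :: complex vec list) (c :: nat \<Rightarrow> complex).
      set vs \<subseteq> S \<and> (\<forall>i<n. v $ i = (\<Sum>j<length vs. c j * (vs ! j) $ i))}"

definition supp :: "complex mat \<Rightarrow> complex vec set" where
  "supp \<rho> = cspan (dim_row \<rho>) {v. \<exists>k. k \<noteq> 0 \<and> eigenvector \<rho> v k}"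

definition is_subspace :: "nat \<Rightarrow> complex vec set \<Rightarrow> bool" where
  "is_subspace n X \<longleftrightarrow> X \<subseteq> carrier_vec n \<and> cspan n X = X"

text \<open>lifting rho1 X# rho2 (X a subspace of C^n1 (x) C^n2; every subspace is closed in finite dimension)\<close>
definition lifting :: "nat \<Rightarrow> nat \<Rightarrow> complex vec set \<Rightarrow> complex mat \<Rightarrow> complex mat \<Rightarrow> bool" where
  "lifting n1 n2 X \<rho>1 \<rho>2 \<longleftrightarrow>
     (\<exists>\<rho>. pdo (n1 * n2) \<rho> \<and> coupling n1 n2 \<rho> \<rho>1 \<rho>2 \<and> supp \<rho> \<subseteq> X)"

definition tensor_vec :: "nat \<Rightarrow> nat \<Rightarrow> complex vec \<Rightarrow> complex vec \<Rightarrow> complex vec" where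
  "tensor_vec n1 n2 u v = vec (n1 * n2) (\<lambda>k. u $ (k div n2) * v $ (k mod n2))"

definition onb :: "nat \<Rightarrow> complex vec list \<Rightarrow> bool" where
  "onb n B \<longleftrightarrow> length B = n \<and> set B \<subseteq> carrier_vec n \<and>
     (\<forall>i<n. \<forall>j<n. B ! i \<bullet>c B ! j = (if i = j then 1 else 0)) \<and>
     cspan n (set B) = carrier_vec n"

definition eq_basis :: "nat \<Rightarrow> complex vec list \<Rightarrow> complex vec set" where
  "eq_basis n B = cspan (n * n) {tensor_vec n n (B ! i) (B ! i) | i. i < n}"

text \<open>swap operator S on C^n (x) C^n : S|i,j> = |j,i>\<close>
definition swap_op :: "nat \<Rightarrow> complex mat" where
  "swap_op n = mat (n * n) (n * n)
     (\<lambda>(r, c). if c = (r mod n) * n + r div n then 1 else 0)"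

definition eq_sym :: "nat \<Rightarrow> complex vec set" where
  "eq_sym n = {((1/2 :: complex) \<cdot>\<^sub>m (1\<^sub>m (n * n) + swap_op n)) *\<^sub>v v | v. v \<in> carrier_vec (n * n)}"

end

theory Submission
  imports Defs
begin

text \<open>Write \<open>\<rho> = \<Sum>\<^sub>i \<lambda>\<^sub>i |b\<^sub>i\<rangle>\<langle>b\<^sub>i|\<close> with an orthonormal eigenbasis \<open>b\<close>
  (spectral theorem, by induction on the dimension: split off one eigenvector and recurse on
  the compression of the operator to its orthogonal complement). Then
  \<open>\<sigma> = \<Sum>\<^sub>i \<lambda>\<^sub>i |b\<^sub>i b\<^sub>i\<rangle>\<langle>b\<^sub>i b\<^sub>i|\<close> is positive, both of its partial traces are \<open>\<rho>\<close>,
  and its support lies in \<open>span {|b\<^sub>i b\<^sub>i\<rangle>}\<close>; this gives (1) \<open>\<Longrightarrow>\<close> (2). Each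
  \<open>|b\<^sub>i b\<^sub>i\<rangle>\<close> is symmetric, so (2) \<open>\<Longrightarrow>\<close> (3). Conversely, if a positive \<open>\<sigma>\<close> has its
  support in the symmetric subspace, then so do all its eigenvectors with nonzero eigenvalue,
  and its spectral decomposition shows that \<open>\<sigma>\<close> is invariant under swapping the two tensor
  factors in row and column index simultaneously. That swap exchanges the two partial traces,
  so \<open>\<rho>\<^sub>1 = \<rho>\<^sub>2\<close>.\<close>

section \<open>Inner products and self-adjoint matrices\<close>

lemma cscalar_prod_eq_sum:
  "x \<in> carrier_vec n \<Longrightarrow> y \<in> carrier_vec n \<Longrightarrow> x \<bullet>c y = (\<Sum>i<n. x $ i * cnj (y $ i))"
  by (simp add: scalar_prod_def lessThan_atLeast0)

lemma cscalar_prod_swap: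
  "x \<in> carrier_vec n \<Longrightarrow> y \<in> carrier_vec n \<Longrightarrow> x \<bullet>c y = cnj (y \<bullet>c x)"
  by (simp add: cscalar_prod_eq_sum cnj_sum mult.commute)

lemma cscalar_prod_add_left:
  "x \<in> carrier_vec n \<Longrightarrow> y \<in> carrier_vec n \<Longrightarrow> z \<in> carrier_vec n \<Longrightarrow>
    (x + y) \<bullet>c z = x \<bullet>c z + y \<bullet>c z"
  by (simp add: add_scalar_prod_distrib[of _ n])

lemma cscalar_prod_add_right:
  "x \<in> carrier_vec n \<Longrightarrow> y \<in> carrier_vec n \<Longrightarrow> z \<in> carrier_vec n \<Longrightarrow>
    x \<bullet>c (y + z) = x \<bullet>c y + x \<bullet>c z"
  by (simp add: conjugate_add_vec[of _ n] scalar_prod_add_distrib[of _ n])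

lemma cscalar_prod_smult_left:
  "x \<in> carrier_vec n \<Longrightarrow> y \<in> carrier_vec n \<Longrightarrow> (a \<cdot>\<^sub>v x) \<bullet>c y = a * (x \<bullet>c y)"
  by (simp add: cscalar_prod_eq_sum sum_distrib_left mult.assoc)

lemma cscalar_prod_smult_right:
  "x \<in> carrier_vec n \<Longrightarrow> y \<in> carrier_vec n \<Longrightarrow> x \<bullet>c (a \<cdot>\<^sub>v y) = cnj a * (x \<bullet>c y)"
  by (simp add: cscalar_prod_eq_sum sum_distrib_left mult_ac)

lemma mult_mat_vec_index_sum:
  "A \<in> carrier_mat nr nc \<Longrightarrow> v \<in> carrier_vec nc \<Longrightarrow> i < nr \<Longrightarrow>
    (A *\<^sub>v v) $ i = (\<Sum>k<nc. A $$ (i, k) * v $ k)"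
  by (simp add: scalar_prod_def lessThan_atLeast0)

lemma mat_eq_if_mult_vec_eq:
  fixes A B :: "complex mat"
  assumes A: "A \<in> carrier_mat nr nc" and B: "B \<in> carrier_mat nr nc"
    and eq: "\<And>v. v \<in> carrier_vec nc \<Longrightarrow> A *\<^sub>v v = B *\<^sub>v v"
  shows "A = B"
proof (rule eq_matI)
  fix i j assume "i < dim_row B" and "j < dim_col B"
  then have "C $$ (i, j) = (C *\<^sub>v unit_vec nc j) $ i" if "C \<in> carrier_mat nr nc" for C :: "complex mat"
    using B that by simp
  then show "A $$ (i, j) = B $$ (i, j)"
    using A B eq[of "unit_vec nc j"] by simp
qed (use A B in auto)

definition self_adjoint :: "nat \<Rightarrow> complex mat \<Rightarrow> bool" where
  "self_adjoint n A \<longleftrightarrow> A \<in> carrier_mat n n \<and>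
     (\<forall>x \<in> carrier_vec n. \<forall>y \<in> carrier_vec n. (A *\<^sub>v x) \<bullet>c y = x \<bullet>c (A *\<^sub>v y))"

lemma self_adjointD:
  "self_adjoint n A \<Longrightarrow> x \<in> carrier_vec n \<Longrightarrow> y \<in> carrier_vec n \<Longrightarrow> (A *\<^sub>v x) \<bullet>c y = x \<bullet>c (A *\<^sub>v y)"
  unfolding self_adjoint_def by blast

lemma self_adjoint_carrier: "self_adjoint n A \<Longrightarrow> A \<in> carrier_mat n n"
  unfolding self_adjoint_def by blast

lemma self_adjointI_entries:
  assumes A: "A \<in> carrier_mat n n"
    and herm: "\<And>i j. i < n \<Longrightarrow> j < n \<Longrightarrow> cnj (A $$ (j, i)) = A $$ (i, j)"
  shows "self_adjoint n A"
  unfolding self_adjoint_def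
proof (intro conjI A ballI)
  fix x y :: "complex vec" assume x: "x \<in> carrier_vec n" and y: "y \<in> carrier_vec n"
  have "(A *\<^sub>v x) \<bullet>c y = (\<Sum>i<n. \<Sum>k<n. A $$ (i, k) * x $ k * cnj (y $ i))"
    using A x y by (simp add: cscalar_prod_eq_sum[of _ n] mult_mat_vec_index_sum sum_distrib_right
        del: index_mult_mat_vec)
  also have "\<dots> = (\<Sum>k<n. \<Sum>i<n. x $ k * cnj (A $$ (k, i) * y $ i))"
    by (subst sum.swap) (simp add: herm mult_ac)
  also have "\<dots> = x \<bullet>c (A *\<^sub>v y)"
    using A x y by (simp add: cscalar_prod_eq_sum[of _ n] mult_mat_vec_index_sum sum_distrib_left
        del: index_mult_mat_vec)
  finally show "(A *\<^sub>v x) \<bullet>c y = x \<bullet>c (A *\<^sub>v y)" .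
qed

lemma positive_op_quadratic_nonneg:
  "positive_op n A \<Longrightarrow> v \<in> carrier_vec n \<Longrightarrow> 0 \<le> (A *\<^sub>v v) \<bullet>c v"
  unfolding positive_op_def less_eq_complex_def by simp

lemma positive_op_self_adjoint:
  assumes pos: "positive_op n A"
  shows "self_adjoint n A"
  unfolding self_adjoint_def
proof (intro conjI ballI)
  show A: "A \<in> carrier_mat n n" using pos positive_op_def by blast
  fix x y :: "complex vec" assume x: "x \<in> carrier_vec n" and y: "y \<in> carrier_vec n"
  define q where "q v = (A *\<^sub>v v) \<bullet>c v" for v
  have real: "Im (q v) = 0" if "v \<in> carrier_vec n" for v
    using pos that unfolding positive_op_def q_def by blast
  have expand: "q (x + a \<cdot>\<^sub>v y)
      = q x + cnj a * ((A *\<^sub>v x) \<bullet>c y) + a * ((A *\<^sub>v y) \<bullet>c x) + a * cnj a * q y" for a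
    using A x y unfolding q_def
    by (simp add: mult_add_distrib_mat_vec mult_mat_vec cscalar_prod_add_left[of _ n]
        cscalar_prod_add_right[of _ n] cscalar_prod_smult_left[of _ n] cscalar_prod_smult_right[of _ n]
        ring_distribs)
  \<comment> \<open>polarisation: reality of \<open>q\<close> at \<open>x + y\<close> and at \<open>x + \<i> y\<close> forces conjugate symmetry\<close>
  have "Im (q (x + 1 \<cdot>\<^sub>v y)) = 0" and "Im (q (x + \<i> \<cdot>\<^sub>v y)) = 0"
    using real x y by auto
  then have "(A *\<^sub>v y) \<bullet>c x = cnj ((A *\<^sub>v x) \<bullet>c y)"
    using real[OF x] real[OF y] unfolding expand by (simp add: complex_eq_iff)
  then show "(A *\<^sub>v x) \<bullet>c y = x \<bullet>c (A *\<^sub>v y)"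
    using cscalar_prod_swap[of x n "A *\<^sub>v y"] A x y by simp
qed

lemma cscalar_prod_lincomb_left:
  fixes t :: "nat \<Rightarrow> complex vec"
  assumes t: "\<And>i. i < m \<Longrightarrow> t i \<in> carrier_vec n" and y: "y \<in> carrier_vec n"
  shows "vec n (\<lambda>r. \<Sum>i<m. a i * t i $ r) \<bullet>c y = (\<Sum>i<m. a i * (t i \<bullet>c y))"
proof -
  have "vec n (\<lambda>r. \<Sum>i<m. a i * t i $ r) \<bullet>c y = (\<Sum>r<n. \<Sum>i<m. a i * (t i $ r * cnj (y $ r)))"
    using y by (simp add: cscalar_prod_eq_sum[of _ n] sum_distrib_left sum_distrib_right mult_ac)
  also have "\<dots> = (\<Sum>i<m. a i * (t i \<bullet>c y))"
    using y t by (subst sum.swap) (simp add: cscalar_prod_eq_sum[of _ n] sum_distrib_left)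
  finally show ?thesis .
qed

section \<open>Orthonormal bases\<close>

definition orthonormal_list :: "nat \<Rightarrow> complex vec list \<Rightarrow> bool" where
  "orthonormal_list n ws \<longleftrightarrow> length ws = n \<and> set ws \<subseteq> carrier_vec n \<and>
     (\<forall>i<n. \<forall>j<n. ws ! i \<bullet>c ws ! j = (if i = j then 1 else 0))"

lemma orthonormal_list_carrier: "orthonormal_list n ws \<Longrightarrow> i < n \<Longrightarrow> ws ! i \<in> carrier_vec n"
  unfolding orthonormal_list_def by auto

lemma orthonormal_listD:
  "orthonormal_list n ws \<Longrightarrow> i < n \<Longrightarrow> j < n \<Longrightarrow> ws ! i \<bullet>c ws ! j = (if i = j then 1 else 0)"
  unfolding orthonormal_list_def by blast

lemma orthonormal_list_rows:
  assumes ws: "orthonormal_list n ws" and r: "r < n" and s: "s < n"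
  shows "(\<Sum>i<n. ws ! i $ r * cnj (ws ! i $ s)) = (if r = s then 1 else 0)"
proof -
  define U where "U = mat n n (\<lambda>(r, i). ws ! i $ r)"
  define V where "V = mat n n (\<lambda>(i, s). cnj (ws ! i $ s))"
  have U: "U \<in> carrier_mat n n" and V: "V \<in> carrier_mat n n" unfolding U_def V_def by auto
  have "V * U = 1\<^sub>m n"
  proof (rule eq_matI)
    fix i j assume "i < dim_row (1\<^sub>m n :: complex mat)" and "j < dim_col (1\<^sub>m n :: complex mat)"
    then have i: "i < n" and j: "j < n" by auto
    have "(V * U) $$ (i, j) = ws ! j \<bullet>c ws ! i"
      using i j orthonormal_list_carrier[OF ws i]
      by (simp add: U_def V_def cscalar_prod_eq_sum[OF orthonormal_list_carrier[OF ws j]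
          orthonormal_list_carrier[OF ws i]] scalar_prod_def lessThan_atLeast0 mult.commute)
    then show "(V * U) $$ (i, j) = 1\<^sub>m n $$ (i, j)"
      using orthonormal_listD[OF ws j i] i j by auto
  qed (auto simp: U_def V_def)
  then have "(U * V) $$ (r, s) = (if r = s then 1 else 0)"
    using mat_mult_left_right_inverse[OF V U] r s by simp
  then show ?thesis
    using r s by (simp add: U_def V_def scalar_prod_def lessThan_atLeast0)
qed

definition basis_comb :: "nat \<Rightarrow> complex vec list \<Rightarrow> (nat \<Rightarrow> complex) \<Rightarrow> complex vec" where
  "basis_comb n ws f = vec n (\<lambda>r. \<Sum>j<n. f j * ws ! j $ r)"

lemma basis_comb_carrier [simp]: "basis_comb n ws f \<in> carrier_vec n"
  by (simp add: basis_comb_def)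

lemma basis_comb_cscalar_prod_left:
  assumes ws: "orthonormal_list n ws" and y: "y \<in> carrier_vec n"
  shows "basis_comb n ws f \<bullet>c y = (\<Sum>j<n. f j * (ws ! j \<bullet>c y))"
  unfolding basis_comb_def using cscalar_prod_lincomb_left[OF orthonormal_list_carrier[OF ws] y] .

lemma basis_comb_coeff:
  assumes ws: "orthonormal_list n ws" and k: "k < n"
  shows "basis_comb n ws f \<bullet>c ws ! k = f k"
proof -
  have "basis_comb n ws f \<bullet>c ws ! k = (\<Sum>j<n. if j = k then f k else 0)"
    unfolding basis_comb_cscalar_prod_left[OF ws orthonormal_list_carrier[OF ws k]]
    by (rule sum.cong) (auto simp: orthonormal_listD[OF ws _ k])
  then show ?thesis using k by simp
qed

lemma basis_comb_cscalar_prod: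
  assumes ws: "orthonormal_list n ws"
  shows "basis_comb n ws f \<bullet>c basis_comb n ws g = (\<Sum>j<n. f j * cnj (g j))"
proof -
  have "ws ! j \<bullet>c basis_comb n ws g = cnj (g j)" if "j < n" for j
    using cscalar_prod_swap[OF orthonormal_list_carrier[OF ws that] basis_comb_carrier]
      basis_comb_coeff[OF ws that] by simp
  then show ?thesis by (simp add: basis_comb_cscalar_prod_left[OF ws])
qed

lemma basis_comb_expansion:
  assumes ws: "orthonormal_list n ws" and y: "y \<in> carrier_vec n"
  shows "basis_comb n ws (\<lambda>i. y \<bullet>c ws ! i) = y"
proof (rule eq_vecI)
  fix r assume "r < dim_vec y"
  then have r: "r < n" using y by simp
  have "basis_comb n ws (\<lambda>i. y \<bullet>c ws ! i) $ r = (\<Sum>i<n. \<Sum>s<n. y $ s * cnj (ws ! i $ s) * ws ! i $ r)"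
    using r y orthonormal_list_carrier[OF ws]
    by (simp add: basis_comb_def cscalar_prod_eq_sum[of _ n] sum_distrib_right)
  also have "\<dots> = (\<Sum>s<n. y $ s * (\<Sum>i<n. ws ! i $ r * cnj (ws ! i $ s)))"
    by (subst sum.swap) (simp add: sum_distrib_left mult_ac)
  also have "\<dots> = y $ r"
    using r by (simp add: orthonormal_list_rows[OF ws r] flip: of_bool_def)
  finally show "basis_comb n ws (\<lambda>i. y \<bullet>c ws ! i) $ r = y $ r" .
qed (use y in simp)

lemma cspanI:
  "v \<in> carrier_vec n \<Longrightarrow> set vs \<subseteq> S \<Longrightarrow> (\<forall>i<n. v $ i = (\<Sum>j<length vs. c j * vs ! j $ i)) \<Longrightarrow>
    v \<in> cspan n S"
  unfolding cspan_def by blast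

lemma orthonormal_list_onb:
  assumes ws: "orthonormal_list n ws"
  shows "onb n ws"
proof -
  have "x \<in> cspan n (set ws)" if x: "x \<in> carrier_vec n" for x
  proof (rule cspanI[OF x order.refl])
    show "\<forall>i<n. x $ i = (\<Sum>j<length ws. (x \<bullet>c ws ! j) * ws ! j $ i)"
      using ws by (subst (1) basis_comb_expansion[OF ws x, symmetric])
        (simp add: basis_comb_def orthonormal_list_def)
  qed
  then show ?thesis
    using ws unfolding onb_def orthonormal_list_def cspan_def by blast
qed

definition normalize_vec :: "complex vec \<Rightarrow> complex vec" where
  "normalize_vec x = (1 / complex_of_real (sqrt (Re (x \<bullet>c x)))) \<cdot>\<^sub>v x"

lemma normalize_vec_carrier: "x \<in> carrier_vec n \<Longrightarrow> normalize_vec x \<in> carrier_vec n"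
  by (simp add: normalize_vec_def)

lemma normalize_vec_unit:
  assumes x: "x \<in> carrier_vec n" and x0: "x \<noteq> 0\<^sub>v n"
  shows "normalize_vec x \<bullet>c normalize_vec x = 1"
proof -
  have "0 < x \<bullet>c x" using x x0 by simp
  then obtain r where r: "x \<bullet>c x = complex_of_real r" and "0 < r"
    by (auto simp: less_complex_def complex_eq_iff)
  then have "complex_of_real (sqrt r) * complex_of_real (sqrt r) = complex_of_real r"
    by (simp flip: of_real_mult)
  then show ?thesis
    using x r \<open>0 < r\<close> by (simp add: normalize_vec_def cscalar_prod_smult_left[of _ n]
        cscalar_prod_smult_right[of _ n] field_simps)
qed

lemma normalize_vec_orthogonal:
  "x \<in> carrier_vec n \<Longrightarrow> y \<in> carrier_vec n \<Longrightarrow> x \<bullet>c y = 0 \<Longrightarrow> normalize_vec x \<bullet>c normalize_vec y = 0"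
  by (simp add: normalize_vec_def cscalar_prod_smult_left[of _ n] cscalar_prod_smult_right[of _ n])

lemma orthonormal_list_extend:
  assumes v: "v \<in> carrier_vec n" and v0: "v \<noteq> 0\<^sub>v n"
  shows "\<exists>ws. orthonormal_list n ws \<and> ws ! 0 = normalize_vec v"
proof -
  interpret cof_vec_space n "TYPE(complex)" .
  have "n \<noteq> 0" using v v0 by auto
  define gs where "gs = gram_schmidt n (basis_completion v)"
  note completion = basis_completion[OF v v0]
  note gs = gram_schmidt_result[OF completion(2,4,5) gs_def]
  have len: "length gs = n" using gs(4) completion(6) by simp
  have gs_carrier: "gs ! i \<in> carrier_vec n" if "i < n" for i using gs(3) len that by auto
  have "gs ! 0 = v"
    using gram_schmidt_hd[OF v] completion(6,7) \<open>n \<noteq> 0\<close> len unfolding gs_def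
    by (metis hd_Cons_tl hd_conv_nth length_0_conv)
  moreover have "orthonormal_list n (map normalize_vec gs)"
    unfolding orthonormal_list_def
  proof (intro conjI allI impI)
    fix i j assume i: "i < n" and j: "j < n"
    have "gs ! i \<bullet>c gs ! i \<noteq> 0"
      using gs(2) i len unfolding corthogonal_def by auto
    then have "gs ! i \<noteq> 0\<^sub>v n" by auto
    moreover have "gs ! i \<bullet>c gs ! j = 0" if "i \<noteq> j"
      using gs(2) i j that len unfolding corthogonal_def by auto
    ultimately show "map normalize_vec gs ! i \<bullet>c map normalize_vec gs ! j = (if i = j then 1 else 0)"
      using normalize_vec_unit[OF gs_carrier[OF i]]
        normalize_vec_orthogonal[OF gs_carrier[OF i] gs_carrier[OF j]]
        i j len by auto
  qed (use len gs(3) normalize_vec_carrier in auto)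
  ultimately show ?thesis using \<open>n \<noteq> 0\<close> len by (intro exI[of _ "map normalize_vec gs"]) simp
qed

lemma eigenvector_exists:
  fixes A :: "complex mat"
  assumes A: "A \<in> carrier_mat n n" and n: "n \<noteq> 0"
  shows "\<exists>v e. eigenvector A v e"
proof -
  obtain es where cp: "char_poly A = (\<Prod>a\<leftarrow>es. [:- a, 1:])" and len: "length es = n"
    using char_poly_factorized[OF A] by blast
  then obtain e es' where "es = e # es'" using n by (cases es) auto
  then have "eigenvalue A e" using eigenvalue_root_char_poly[OF A] cp by simp
  then show ?thesis unfolding eigenvalue_def by blast
qed

section \<open>Spectral theorem\<close>

text \<open>If \<open>ws ! 0\<close> is an eigenvector of the self-adjoint \<open>A\<close>, the tail of the orthonormal
  basis \<open>ws\<close> spans an \<open>A\<close>-invariant subspace: \<open>compression m A ws\<close> is the matrix of \<open>A\<close> on it,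
  and \<open>tail_comb\<close> maps coordinates with respect to the tail back to vectors.\<close>

definition compression :: "nat \<Rightarrow> complex mat \<Rightarrow> complex vec list \<Rightarrow> complex mat" where
  "compression m A ws = mat m m (\<lambda>(i, j). (A *\<^sub>v ws ! Suc j) \<bullet>c ws ! Suc i)"

definition tail_comb :: "nat \<Rightarrow> complex vec list \<Rightarrow> complex vec \<Rightarrow> complex vec" where
  "tail_comb n ws c = basis_comb n ws (\<lambda>j. if j = 0 then 0 else c $ (j - 1))"

lemma sum_tail_coeffs:
  fixes c :: "complex vec"
  shows "(\<Sum>j<Suc m. (if j = 0 then 0 else c $ (j - 1)) * g j) = (\<Sum>j<m. c $ j * g (Suc j))"
  by (subst sum.lessThan_Suc_shift) simp

lemma compression_self_adjoint:
  assumes A: "self_adjoint (Suc m) A" and ws: "orthonormal_list (Suc m) ws"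
  shows "self_adjoint m (compression m A ws)"
proof (rule self_adjointI_entries)
  fix i j assume "i < m" and "j < m"
  then have wi: "ws ! Suc i \<in> carrier_vec (Suc m)" and wj: "ws ! Suc j \<in> carrier_vec (Suc m)"
    using orthonormal_list_carrier[OF ws] by auto
  have "cnj ((A *\<^sub>v ws ! Suc i) \<bullet>c ws ! Suc j) = cnj (ws ! Suc i \<bullet>c (A *\<^sub>v ws ! Suc j))"
    using self_adjointD[OF A wi wj] by simp
  also have "\<dots> = (A *\<^sub>v ws ! Suc j) \<bullet>c ws ! Suc i"
    using cscalar_prod_swap[OF _ wi, of "A *\<^sub>v ws ! Suc j"] self_adjoint_carrier[OF A] wj by simp
  finally show "cnj (compression m A ws $$ (j, i)) = compression m A ws $$ (i, j)"
    using \<open>i < m\<close> \<open>j < m\<close> by (simp add: compression_def)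
qed (simp add: compression_def)

lemma tail_comb_orthogonal_head:
  "orthonormal_list (Suc m) ws \<Longrightarrow> tail_comb (Suc m) ws c \<bullet>c ws ! 0 = 0"
  unfolding tail_comb_def by (simp add: basis_comb_coeff)

lemma tail_comb_cscalar_prod:
  assumes ws: "orthonormal_list (Suc m) ws" and c: "c \<in> carrier_vec m" and d: "d \<in> carrier_vec m"
  shows "tail_comb (Suc m) ws c \<bullet>c tail_comb (Suc m) ws d = c \<bullet>c d"
  using c d unfolding tail_comb_def basis_comb_cscalar_prod[OF ws]
  by (subst sum.lessThan_Suc_shift) (simp add: cscalar_prod_eq_sum[of _ m])

lemma orthonormal_list_Cons_tail_comb:
  assumes ws: "orthonormal_list (Suc m) ws" and cs: "orthonormal_list m cs"
  shows "orthonormal_list (Suc m) (ws ! 0 # map (tail_comb (Suc m) ws) cs)"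
proof -
  have w0: "ws ! 0 \<in> carrier_vec (Suc m)" and w00: "ws ! 0 \<bullet>c ws ! 0 = 1"
    using orthonormal_list_carrier[OF ws] orthonormal_listD[OF ws] by auto
  have head: "ws ! 0 \<bullet>c tail_comb (Suc m) ws c = 0" for c
    using cscalar_prod_swap[OF w0 basis_comb_carrier] tail_comb_orthogonal_head[OF ws]
    unfolding tail_comb_def by simp
  show ?thesis
    unfolding orthonormal_list_def
  proof (intro conjI allI impI)
    fix i j assume "i < Suc m" and "j < Suc m"
    then show "(ws ! 0 # map (tail_comb (Suc m) ws) cs) ! i \<bullet>c (ws ! 0 # map (tail_comb (Suc m) ws) cs) ! j
      = (if i = j then 1 else 0)"
      using cs w00 head tail_comb_orthogonal_head[OF ws]
        tail_comb_cscalar_prod[OF ws orthonormal_list_carrier[OF cs] orthonormal_list_carrier[OF cs]]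
      by (cases i; cases j) (auto simp: orthonormal_list_def)
  qed (use cs w0 in \<open>auto simp: orthonormal_list_def tail_comb_def\<close>)
qed

lemma tail_comb_eigenvector:
  assumes A: "self_adjoint (Suc m) A" and ws: "orthonormal_list (Suc m) ws"
    and head: "A *\<^sub>v ws ! 0 = e \<cdot>\<^sub>v ws ! 0"
    and c: "c \<in> carrier_vec m" and ev: "compression m A ws *\<^sub>v c = \<mu> \<cdot>\<^sub>v c"
  shows "A *\<^sub>v tail_comb (Suc m) ws c = \<mu> \<cdot>\<^sub>v tail_comb (Suc m) ws c"
proof -
  define f where "f j = (if j = 0 then 0 else c $ (j - 1))" for j
  define t where "t = tail_comb (Suc m) ws c"
  have t: "t = basis_comb (Suc m) ws f" and t_carrier: "t \<in> carrier_vec (Suc m)"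
    unfolding t_def tail_comb_def f_def by simp_all
  have w: "\<And>i. i < Suc m \<Longrightarrow> ws ! i \<in> carrier_vec (Suc m)"
    using orthonormal_list_carrier[OF ws] .
  have AM: "A \<in> carrier_mat (Suc m) (Suc m)" using self_adjoint_carrier[OF A] .
  have coeff: "(A *\<^sub>v t) \<bullet>c ws ! i = \<mu> * f i" if i: "i < Suc m" for i
  proof (cases i)
    case 0
    have "(A *\<^sub>v t) \<bullet>c ws ! 0 = t \<bullet>c (e \<cdot>\<^sub>v ws ! 0)"
      using self_adjointD[OF A t_carrier w] head by simp
    also have "\<dots> = cnj e * (t \<bullet>c ws ! 0)"
      using cscalar_prod_smult_right[OF t_carrier w] by simp
    also have "\<dots> = 0" using tail_comb_orthogonal_head[OF ws] t_def by simp
    finally show ?thesis using 0 by (simp add: f_def)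
  next
    case (Suc i')
    have Awi: "A *\<^sub>v ws ! i \<in> carrier_vec (Suc m)" using AM w[OF i] by simp
    have "(A *\<^sub>v t) \<bullet>c ws ! i = t \<bullet>c (A *\<^sub>v ws ! i)"
      using self_adjointD[OF A t_carrier w[OF i]] .
    also have "\<dots> = (\<Sum>j<m. c $ j * (ws ! Suc j \<bullet>c (A *\<^sub>v ws ! i)))"
      unfolding t basis_comb_cscalar_prod_left[OF ws Awi] f_def by (rule sum_tail_coeffs)
    also have "\<dots> = (\<Sum>j<m. compression m A ws $$ (i', j) * c $ j)"
      using i Suc self_adjointD[OF A w w[OF i]] by (intro sum.cong) (auto simp: compression_def)
    also have "\<dots> = \<mu> * c $ i'"
      using ev c i Suc mult_mat_vec_index_sum[of "compression m A ws" m m c i']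
      by (auto simp: compression_def)
    finally show ?thesis using Suc by (simp add: f_def)
  qed
  have "A *\<^sub>v t = basis_comb (Suc m) ws (\<lambda>i. (A *\<^sub>v t) \<bullet>c ws ! i)"
    using basis_comb_expansion[OF ws] AM t_carrier by simp
  also have "\<dots> = basis_comb (Suc m) ws (\<lambda>i. \<mu> * f i)"
    unfolding basis_comb_def by (simp add: coeff)
  also have "\<dots> = \<mu> \<cdot>\<^sub>v t"
    unfolding t by (rule eq_vecI)
      (simp_all add: basis_comb_def sum_distrib_left mult.assoc del: sum.lessThan_Suc)
  finally show ?thesis unfolding t_def .
qed

theorem self_adjoint_eigenbasis:
  "self_adjoint n A \<Longrightarrow> \<exists>ws. orthonormal_list n ws \<and> (\<forall>i<n. \<exists>k. A *\<^sub>v ws ! i = k \<cdot>\<^sub>v ws ! i)"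
proof (induction n arbitrary: A)
  case 0
  then show ?case by (intro exI[of _ "[]"]) (simp add: orthonormal_list_def)
next
  case (Suc m)
  have AM: "A \<in> carrier_mat (Suc m) (Suc m)" using self_adjoint_carrier[OF Suc.prems] .
  obtain v e where "eigenvector A v e" using eigenvector_exists[OF AM] by blast
  then have v: "v \<in> carrier_vec (Suc m)" and "v \<noteq> 0\<^sub>v (Suc m)" and Av: "A *\<^sub>v v = e \<cdot>\<^sub>v v"
    using AM unfolding eigenvector_def by auto
  then obtain ws where ws: "orthonormal_list (Suc m) ws" and w0: "ws ! 0 = normalize_vec v"
    using orthonormal_list_extend by blast
  have head: "A *\<^sub>v ws ! 0 = e \<cdot>\<^sub>v ws ! 0"
    unfolding w0 normalize_vec_def using AM v Av by (simp add: mult_mat_vec smult_smult_assoc mult.commute)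
  obtain cs where cs: "orthonormal_list m cs"
    and cs_eigen: "\<forall>i<m. \<exists>k. compression m A ws *\<^sub>v cs ! i = k \<cdot>\<^sub>v cs ! i"
    using Suc.IH[OF compression_self_adjoint[OF Suc.prems ws]] by blast
  have "\<exists>k. A *\<^sub>v (ws ! 0 # map (tail_comb (Suc m) ws) cs) ! i
      = k \<cdot>\<^sub>v (ws ! 0 # map (tail_comb (Suc m) ws) cs) ! i" if "i < Suc m" for i
  proof (cases i)
    case (Suc i')
    then obtain k where "compression m A ws *\<^sub>v cs ! i' = k \<cdot>\<^sub>v cs ! i'" and "i' < m"
      using cs_eigen \<open>i < Suc m\<close> by auto
    then show ?thesis
      using tail_comb_eigenvector[OF Suc.prems ws head orthonormal_list_carrier[OF cs]] cs Suc
      by (auto simp: orthonormal_list_def)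
  qed (use head in auto)
  then show ?case using orthonormal_list_Cons_tail_comb[OF ws cs] by blast
qed

definition rank_one_sum :: "nat \<Rightarrow> nat \<Rightarrow> (nat \<Rightarrow> complex) \<Rightarrow> (nat \<Rightarrow> complex vec) \<Rightarrow> complex mat" where
  "rank_one_sum N m k t = mat N N (\<lambda>(r, c). \<Sum>i<m. k i * t i $ r * cnj (t i $ c))"

lemma rank_one_sum_carrier: "rank_one_sum N m k t \<in> carrier_mat N N"
  by (simp add: rank_one_sum_def)

lemma rank_one_sum_mult_vec:
  assumes t: "\<And>i. i < m \<Longrightarrow> t i \<in> carrier_vec N" and v: "v \<in> carrier_vec N"
  shows "rank_one_sum N m k t *\<^sub>v v = vec N (\<lambda>r. \<Sum>i<m. k i * (v \<bullet>c t i) * t i $ r)"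
proof (rule eq_vecI)
  fix r assume "r < dim_vec (vec N (\<lambda>r. \<Sum>i<m. k i * (v \<bullet>c t i) * t i $ r))"
  then have r: "r < N" by simp
  have "(rank_one_sum N m k t *\<^sub>v v) $ r = (\<Sum>c<N. rank_one_sum N m k t $$ (r, c) * v $ c)"
    using mult_mat_vec_index_sum[OF rank_one_sum_carrier v r] .
  also have "\<dots> = (\<Sum>c<N. \<Sum>i<m. k i * t i $ r * (v $ c * cnj (t i $ c)))"
    using r by (simp add: rank_one_sum_def sum_distrib_left mult_ac)
  also have "\<dots> = (\<Sum>i<m. k i * (v \<bullet>c t i) * t i $ r)"
    using v t by (subst sum.swap) (simp add: cscalar_prod_eq_sum[of _ N] sum_distrib_left mult_ac)
  finally show "(rank_one_sum N m k t *\<^sub>v v) $ r = vec N (\<lambda>r. \<Sum>i<m. k i * (v \<bullet>c t i) * t i $ r) $ r"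
    using r by simp
qed (simp add: rank_one_sum_def)

lemma rank_one_sum_positive:
  assumes t: "\<And>i. i < m \<Longrightarrow> t i \<in> carrier_vec N" and k: "\<And>i. i < m \<Longrightarrow> 0 \<le> k i"
  shows "positive_op N (rank_one_sum N m k t)"
proof -
  have "0 \<le> (rank_one_sum N m k t *\<^sub>v v) \<bullet>c v" if v: "v \<in> carrier_vec N" for v
  proof -
    have "(rank_one_sum N m k t *\<^sub>v v) \<bullet>c v = (\<Sum>i<m. k i * (v \<bullet>c t i) * (t i \<bullet>c v))"
      using t v by (simp add: rank_one_sum_mult_vec cscalar_prod_lincomb_left)
    also have "\<dots> = (\<Sum>i<m. k i * complex_of_real ((cmod (v \<bullet>c t i))\<^sup>2))"
      using cscalar_prod_swap[OF t v] by (simp add: mult.assoc flip: complex_norm_square)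
    also have "0 \<le> \<dots>"
      using k by (intro sum_nonneg mult_nonneg_nonneg) (auto simp: less_eq_complex_def)
    finally show ?thesis .
  qed
  then show ?thesis
    unfolding positive_op_def less_eq_complex_def using rank_one_sum_carrier by simp
qed

lemma eigenvalue_eq_cscalar_prod:
  "orthonormal_list n ws \<Longrightarrow> i < n \<Longrightarrow> A *\<^sub>v ws ! i = k \<cdot>\<^sub>v ws ! i \<Longrightarrow> k = (A *\<^sub>v ws ! i) \<bullet>c ws ! i"
  by (simp add: cscalar_prod_smult_left[OF orthonormal_list_carrier orthonormal_list_carrier]
      orthonormal_listD)

lemma self_adjoint_eigen_decomposition:
  assumes A: "self_adjoint n A" and ws: "orthonormal_list n ws"
    and ev: "\<And>i. i < n \<Longrightarrow> A *\<^sub>v ws ! i = k i \<cdot>\<^sub>v ws ! i"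
  shows "A = rank_one_sum n n k ((!) ws)"
proof (rule mat_eq_if_mult_vec_eq[OF self_adjoint_carrier[OF A] rank_one_sum_carrier])
  fix x :: "complex vec" assume x: "x \<in> carrier_vec n"
  have w: "\<And>i. i < n \<Longrightarrow> ws ! i \<in> carrier_vec n" using orthonormal_list_carrier[OF ws] .
  have coeff: "(A *\<^sub>v x) \<bullet>c ws ! i = k i * (x \<bullet>c ws ! i)" if i: "i < n" for i
  proof -
    have "cnj (k i) = cnj ((A *\<^sub>v ws ! i) \<bullet>c ws ! i)"
      using eigenvalue_eq_cscalar_prod[OF ws i ev[OF i]] by simp
    also have "\<dots> = k i"
      using cscalar_prod_swap[OF w[OF i], of "A *\<^sub>v ws ! i"] self_adjointD[OF A w[OF i] w[OF i]]
        eigenvalue_eq_cscalar_prod[OF ws i ev[OF i]] self_adjoint_carrier[OF A] w[OF i] by simp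
    finally have "cnj (k i) = k i" .
    then show ?thesis
      using self_adjointD[OF A x w[OF i]] ev[OF i] cscalar_prod_smult_right[OF x w[OF i]] by simp
  qed
  have "A *\<^sub>v x = basis_comb n ws (\<lambda>i. (A *\<^sub>v x) \<bullet>c ws ! i)"
    using basis_comb_expansion[OF ws] self_adjoint_carrier[OF A] x by simp
  also have "\<dots> = rank_one_sum n n k ((!) ws) *\<^sub>v x"
    using w x by (simp add: rank_one_sum_mult_vec basis_comb_def coeff mult.assoc)
  finally show "A *\<^sub>v x = rank_one_sum n n k ((!) ws) *\<^sub>v x" .
qed

lemma positive_op_spectral_decomposition:
  assumes A: "positive_op n A"
  obtains ws k where "orthonormal_list n ws" and "\<And>i. i < n \<Longrightarrow> 0 \<le> k i"
    and "\<And>i. i < n \<Longrightarrow> A *\<^sub>v ws ! i = k i \<cdot>\<^sub>v ws ! i" and "A = rank_one_sum n n k ((!) ws)"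
proof -
  obtain ws where ws: "orthonormal_list n ws" and "\<forall>i<n. \<exists>k. A *\<^sub>v ws ! i = k \<cdot>\<^sub>v ws ! i"
    using self_adjoint_eigenbasis[OF positive_op_self_adjoint[OF A]] by blast
  then obtain k where ev: "\<And>i. i < n \<Longrightarrow> A *\<^sub>v ws ! i = k i \<cdot>\<^sub>v ws ! i"
    by metis
  have "0 \<le> k i" if "i < n" for i
    using eigenvalue_eq_cscalar_prod[OF ws that ev[OF that]]
      positive_op_quadratic_nonneg[OF A orthonormal_list_carrier[OF ws that]] by simp
  then show thesis
    using that ws ev self_adjoint_eigen_decomposition[OF positive_op_self_adjoint[OF A] ws ev] by blast
qed

section \<open>Support and partial traces of sums of rank-one operators\<close>

lemma cspan_subset_cspan_list:
  assumes comb: "\<And>s. s \<in> S \<Longrightarrow> \<exists>d. \<forall>r<n. s $ r = (\<Sum>l<length ts. d l * ts ! l $ r)"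
  shows "cspan n S \<subseteq> cspan n (set ts)"
proof
  fix v assume "v \<in> cspan n S"
  then obtain vs c where v: "v \<in> carrier_vec n" and vs: "set vs \<subseteq> S"
    and vc: "\<forall>r<n. v $ r = (\<Sum>j<length vs. c j * vs ! j $ r)"
    unfolding cspan_def by blast
  have "\<forall>j<length vs. \<exists>d. \<forall>r<n. vs ! j $ r = (\<Sum>l<length ts. d l * ts ! l $ r)"
    using comb vs nth_mem by blast
  then obtain d where d: "\<And>j r. j < length vs \<Longrightarrow> r < n \<Longrightarrow> vs ! j $ r = (\<Sum>l<length ts. d j l * ts ! l $ r)"
    by metis
  show "v \<in> cspan n (set ts)"
  proof (rule cspanI[OF v order.refl], intro allI impI)
    fix r assume r: "r < n"
    have "v $ r = (\<Sum>j<length vs. \<Sum>l<length ts. c j * d j l * ts ! l $ r)"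
      using vc d r by (simp add: sum_distrib_left mult.assoc)
    also have "\<dots> = (\<Sum>l<length ts. (\<Sum>j<length vs. c j * d j l) * ts ! l $ r)"
      by (subst sum.swap) (simp add: sum_distrib_right)
    finally show "v $ r = (\<Sum>l<length ts. (\<Sum>j<length vs. c j * d j l) * ts ! l $ r)" .
  qed
qed

lemma supp_rank_one_sum:
  assumes t: "\<And>i. i < m \<Longrightarrow> t i \<in> carrier_vec N"
  shows "supp (rank_one_sum N m k t) \<subseteq> cspan N (t ` {..<m})"
proof -
  have "\<exists>d. \<forall>r<N. v $ r = (\<Sum>l<length (map t [0..<m]). d l * map t [0..<m] ! l $ r)"
    if "\<exists>\<kappa>. \<kappa> \<noteq> 0 \<and> eigenvector (rank_one_sum N m k t) v \<kappa>" for v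
  proof -
    from that obtain \<kappa> where "\<kappa> \<noteq> 0" and ev: "eigenvector (rank_one_sum N m k t) v \<kappa>" by blast
    then have v: "v \<in> carrier_vec N" and "rank_one_sum N m k t *\<^sub>v v = \<kappa> \<cdot>\<^sub>v v"
      unfolding eigenvector_def using rank_one_sum_carrier[of N m k t] by auto
    then have "\<kappa> * v $ r = (\<Sum>i<m. k i * (v \<bullet>c t i) * t i $ r)" if "r < N" for r
      using that t
      by (metis (no_types, lifting) carrier_vecD index_smult_vec(1) index_vec rank_one_sum_mult_vec)
    then show ?thesis
      using \<open>\<kappa> \<noteq> 0\<close>
      by (intro exI[of _ "\<lambda>i. k i * (v \<bullet>c t i) / \<kappa>"])
        (simp add: eq_divide_eq mult.commute flip: sum_divide_distrib)
  qed
  then have "cspan N {v. \<exists>\<kappa>. \<kappa> \<noteq> 0 \<and> eigenvector (rank_one_sum N m k t) v \<kappa>}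
      \<subseteq> cspan N (set (map t [0..<m]))"
    by (intro cspan_subset_cspan_list) blast
  then show ?thesis
    using rank_one_sum_carrier[of N m k t] by (simp add: supp_def atLeast0LessThan)
qed

lemma tensor_index_less: "a < n1 \<Longrightarrow> j < n2 \<Longrightarrow> a * n2 + j < n1 * (n2 :: nat)"
proof -
  assume "a < n1" and "j < n2"
  then have "a * n2 + j < (a + 1) * n2" by simp
  also have "\<dots> \<le> n1 * n2" using \<open>a < n1\<close> by (intro mult_right_mono) auto
  finally show ?thesis .
qed

lemma sum_lessThan_mult: "(\<Sum>r<n1 * n2. g r) = (\<Sum>a<n1. \<Sum>j<n2. g (a * n2 + j :: nat))"
proof -
  have "(\<Sum>j<n2. g (a * n2 + j)) = sum g {a * n2..<a * n2 + n2}" for a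
    using sum.shift_bounds_nat_ivl[of g 0 "a * n2" n2] by (simp add: atLeast0LessThan add.commute)
  then show ?thesis by (simp add: sum.nat_group)
qed

lemma tensor_vec_carrier [simp]: "tensor_vec n1 n2 u v \<in> carrier_vec (n1 * n2)"
  by (simp add: tensor_vec_def)

lemma tensor_vec_index:
  "a < n1 \<Longrightarrow> j < n2 \<Longrightarrow> tensor_vec n1 n2 u v $ (a * n2 + j) = u $ a * v $ j"
  by (simp add: tensor_vec_def tensor_index_less)

lemma mtrace_ptrace2:
  assumes "\<rho> \<in> carrier_mat (n1 * n2) (n1 * n2)"
  shows "mtrace (ptrace2 n1 n2 \<rho>) = mtrace \<rho>"
  using assms by (simp add: mtrace_def ptrace2_def sum_lessThan_mult)

lemma ptrace2_rank_one_sum_tensor: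
  assumes v: "\<And>i. i < m \<Longrightarrow> v i \<in> carrier_vec n2"
  shows "ptrace2 n1 n2 (rank_one_sum (n1 * n2) m k (\<lambda>i. tensor_vec n1 n2 (u i) (v i)))
    = rank_one_sum n1 m (\<lambda>i. k i * (v i \<bullet>c v i)) u"
proof (rule eq_matI)
  fix a c assume "a < dim_row (rank_one_sum n1 m (\<lambda>i. k i * (v i \<bullet>c v i)) u)"
    and "c < dim_col (rank_one_sum n1 m (\<lambda>i. k i * (v i \<bullet>c v i)) u)"
  then have a: "a < n1" and c: "c < n1" by (auto simp: rank_one_sum_def)
  have "ptrace2 n1 n2 (rank_one_sum (n1 * n2) m k (\<lambda>i. tensor_vec n1 n2 (u i) (v i))) $$ (a, c)
      = (\<Sum>j<n2. \<Sum>i<m. k i * u i $ a * cnj (u i $ c) * (v i $ j * cnj (v i $ j)))"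
    using a c by (simp add: ptrace2_def rank_one_sum_def tensor_index_less tensor_vec_index mult_ac)
  also have "\<dots> = (\<Sum>i<m. k i * (v i \<bullet>c v i) * u i $ a * cnj (u i $ c))"
    using v by (subst sum.swap) (simp add: cscalar_prod_eq_sum[of _ n2] sum_distrib_left mult_ac)
  finally show "ptrace2 n1 n2 (rank_one_sum (n1 * n2) m k (\<lambda>i. tensor_vec n1 n2 (u i) (v i))) $$ (a, c)
      = rank_one_sum n1 m (\<lambda>i. k i * (v i \<bullet>c v i)) u $$ (a, c)"
    using a c by (simp add: rank_one_sum_def)
qed (simp_all add: ptrace2_def rank_one_sum_def)

lemma ptrace1_rank_one_sum_tensor:
  assumes u: "\<And>i. i < m \<Longrightarrow> u i \<in> carrier_vec n1"
  shows "ptrace1 n1 n2 (rank_one_sum (n1 * n2) m k (\<lambda>i. tensor_vec n1 n2 (u i) (v i)))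
    = rank_one_sum n2 m (\<lambda>i. k i * (u i \<bullet>c u i)) v"
proof (rule eq_matI)
  fix b d assume "b < dim_row (rank_one_sum n2 m (\<lambda>i. k i * (u i \<bullet>c u i)) v)"
    and "d < dim_col (rank_one_sum n2 m (\<lambda>i. k i * (u i \<bullet>c u i)) v)"
  then have b: "b < n2" and d: "d < n2" by (auto simp: rank_one_sum_def)
  have "ptrace1 n1 n2 (rank_one_sum (n1 * n2) m k (\<lambda>i. tensor_vec n1 n2 (u i) (v i))) $$ (b, d)
      = (\<Sum>a<n1. \<Sum>i<m. k i * v i $ b * cnj (v i $ d) * (u i $ a * cnj (u i $ a)))"
    using b d by (simp add: ptrace1_def rank_one_sum_def tensor_index_less tensor_vec_index mult_ac)
  also have "\<dots> = (\<Sum>i<m. k i * (u i \<bullet>c u i) * v i $ b * cnj (v i $ d))"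
    using u by (subst sum.swap) (simp add: cscalar_prod_eq_sum[of _ n1] sum_distrib_left mult_ac)
  finally show "ptrace1 n1 n2 (rank_one_sum (n1 * n2) m k (\<lambda>i. tensor_vec n1 n2 (u i) (v i))) $$ (b, d)
      = rank_one_sum n2 m (\<lambda>i. k i * (u i \<bullet>c u i)) v $$ (b, d)"
    using b d by (simp add: rank_one_sum_def)
qed (simp_all add: ptrace1_def rank_one_sum_def)

lemma rank_one_sum_cong:
  "(\<And>i. i < m \<Longrightarrow> k i = k' i) \<Longrightarrow> rank_one_sum N m k t = rank_one_sum N m k' t"
  unfolding rank_one_sum_def by (intro cong_mat refl sum.cong) auto

lemma lifting_eq_basis_self:
  assumes "pdo n \<rho>"
  shows "\<exists>B. onb n B \<and> lifting n n (eq_basis n B) \<rho> \<rho>"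
proof -
  obtain ws k where ws: "orthonormal_list n ws" and k: "\<And>i. i < n \<Longrightarrow> 0 \<le> k i"
    and \<rho>: "\<rho> = rank_one_sum n n k ((!) ws)"
    using positive_op_spectral_decomposition assms unfolding pdo_def by metis
  have w: "\<And>i. i < n \<Longrightarrow> ws ! i \<in> carrier_vec n" using orthonormal_list_carrier[OF ws] .
  have unit_weights: "rank_one_sum n n (\<lambda>i. k i * (ws ! i \<bullet>c ws ! i)) ((!) ws) = \<rho>"
    unfolding \<rho> using orthonormal_listD[OF ws] by (intro rank_one_sum_cong) simp
  define \<sigma> where "\<sigma> = rank_one_sum (n * n) n k (\<lambda>i. tensor_vec n n (ws ! i) (ws ! i))"
  have coupling: "coupling n n \<sigma> \<rho> \<rho>"
    unfolding coupling_def \<sigma>_def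
    using ptrace2_rank_one_sum_tensor[where u="(!) ws" and v="(!) ws" and m=n, OF w]
      ptrace1_rank_one_sum_tensor[where u="(!) ws" and v="(!) ws" and m=n, OF w] unit_weights
    by simp
  have "positive_op (n * n) \<sigma>"
    unfolding \<sigma>_def using k by (intro rank_one_sum_positive) auto
  moreover have "mtrace \<sigma> = mtrace \<rho>"
    using coupling mtrace_ptrace2[of \<sigma> n n] rank_one_sum_carrier unfolding coupling_def \<sigma>_def by metis
  ultimately have pdo: "pdo (n * n) \<sigma>" using assms unfolding pdo_def by simp
  have "supp \<sigma> \<subseteq> cspan (n * n) ((\<lambda>i. tensor_vec n n (ws ! i) (ws ! i)) ` {..<n})"
    unfolding \<sigma>_def by (rule supp_rank_one_sum) simp
  moreover have "{tensor_vec n n (ws ! i) (ws ! i) | i. i < n}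
      = (\<lambda>i. tensor_vec n n (ws ! i) (ws ! i)) ` {..<n}"
    by auto
  ultimately have "supp \<sigma> \<subseteq> eq_basis n ws"
    unfolding eq_basis_def by simp
  then show ?thesis
    using orthonormal_list_onb[OF ws] coupling pdo unfolding lifting_def by blast
qed

section \<open>The symmetric subspace\<close>

definition swap_index :: "nat \<Rightarrow> nat \<Rightarrow> nat" where
  "swap_index n r = (r mod n) * n + r div n"

lemma swap_index_tensor: "a < n \<Longrightarrow> j < n \<Longrightarrow> swap_index n (a * n + j) = j * n + a"
  by (simp add: swap_index_def)

lemma swap_index_less:
  assumes r: "r < n * n"
  shows "swap_index n r < n * n"
proof -
  have "0 < n" using r by (cases n) auto
  then show ?thesis
    unfolding swap_index_def using r by (intro tensor_index_less) (simp_all add: less_mult_imp_div_less)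
qed

lemma swap_index_swap_index:
  assumes r: "r < n * n"
  shows "swap_index n (swap_index n r) = r"
proof -
  have "0 < n" using r by (cases n) auto
  then show ?thesis
    using swap_index_tensor[of "r mod n" n "r div n"] r
    by (simp add: swap_index_def less_mult_imp_div_less)
qed

lemma swap_op_carrier: "swap_op n \<in> carrier_mat (n * n) (n * n)"
  by (simp add: swap_op_def)

lemma swap_op_index:
  "r < n * n \<Longrightarrow> c < n * n \<Longrightarrow> swap_op n $$ (r, c) = (if c = swap_index n r then 1 else 0)"
  by (simp add: swap_op_def swap_index_def)

lemma sym_proj_mult_vec:
  assumes w: "w \<in> carrier_vec (n * n)"
  shows "((1/2 :: complex) \<cdot>\<^sub>m (1\<^sub>m (n * n) + swap_op n)) *\<^sub>v w
    = vec (n * n) (\<lambda>r. (w $ r + w $ swap_index n r) / 2)"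
proof (rule eq_vecI)
  fix r assume "r < dim_vec (vec (n * n) (\<lambda>r. (w $ r + w $ swap_index n r) / 2))"
  then have r: "r < n * n" by simp
  have P: "(1/2 :: complex) \<cdot>\<^sub>m (1\<^sub>m (n * n) + swap_op n) \<in> carrier_mat (n * n) (n * n)"
    using swap_op_carrier by simp
  have "(((1/2 :: complex) \<cdot>\<^sub>m (1\<^sub>m (n * n) + swap_op n)) *\<^sub>v w) $ r
      = ((\<Sum>c<n * n. (if r = c then 1 else 0) * w $ c)
         + (\<Sum>c<n * n. (if c = swap_index n r then 1 else 0) * w $ c)) / 2"
    unfolding mult_mat_vec_index_sum[OF P w r] using r swap_op_carrier[of n]
    by (simp add: swap_op_index sum.distrib ring_distribs flip: sum_divide_distrib)
  also have "\<dots> = (w $ r + w $ swap_index n r) / 2"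
    using r swap_index_less[OF r] by (simp flip: of_bool_def)
  finally show "(((1/2 :: complex) \<cdot>\<^sub>m (1\<^sub>m (n * n) + swap_op n)) *\<^sub>v w) $ r
      = vec (n * n) (\<lambda>r. (w $ r + w $ swap_index n r) / 2) $ r"
    using r by simp
qed (simp add: swap_op_def)

lemma mem_eq_sym_iff:
  "v \<in> eq_sym n \<longleftrightarrow> v \<in> carrier_vec (n * n) \<and> (\<forall>r<n * n. v $ swap_index n r = v $ r)"
proof
  assume "v \<in> eq_sym n"
  then obtain w where w: "w \<in> carrier_vec (n * n)"
    and v: "v = vec (n * n) (\<lambda>r. (w $ r + w $ swap_index n r) / 2)"
    unfolding eq_sym_def using sym_proj_mult_vec by blast
  then show "v \<in> carrier_vec (n * n) \<and> (\<forall>r<n * n. v $ swap_index n r = v $ r)"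
    using swap_index_less swap_index_swap_index by (simp add: add.commute)
next
  assume v: "v \<in> carrier_vec (n * n) \<and> (\<forall>r<n * n. v $ swap_index n r = v $ r)"
  then have "v = ((1/2 :: complex) \<cdot>\<^sub>m (1\<^sub>m (n * n) + swap_op n)) *\<^sub>v v"
    by (auto simp: sym_proj_mult_vec)
  then show "v \<in> eq_sym n"
    unfolding eq_sym_def using v by blast
qed

lemma tensor_vec_swap_index:
  assumes r: "r < n * n"
  shows "tensor_vec n n u v $ swap_index n r = tensor_vec n n v u $ r"
proof -
  have "0 < n" using r by (cases n) auto
  then show ?thesis
    using r swap_index_less[OF r] by (simp add: tensor_vec_def swap_index_def less_mult_imp_div_less)
qed

lemma cspan_subset_eq_sym:
  assumes S: "S \<subseteq> eq_sym n"
  shows "cspan (n * n) S \<subseteq> eq_sym n"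
proof
  fix v assume "v \<in> cspan (n * n) S"
  then obtain vs c where v: "v \<in> carrier_vec (n * n)" and vs: "set vs \<subseteq> S"
    and vc: "\<forall>r<n * n. v $ r = (\<Sum>j<length vs. c j * vs ! j $ r)"
    unfolding cspan_def by blast
  have "vs ! j $ swap_index n r = vs ! j $ r" if "j < length vs" and "r < n * n" for j r
    using S vs nth_mem[OF that(1)] that(2) by (auto simp: mem_eq_sym_iff)
  then show "v \<in> eq_sym n"
    using v vc swap_index_less by (simp add: mem_eq_sym_iff)
qed

lemma eq_basis_subset_eq_sym: "eq_basis n B \<subseteq> eq_sym n"
  unfolding eq_basis_def
  by (rule cspan_subset_eq_sym) (auto simp: mem_eq_sym_iff tensor_vec_swap_index)

lemma eigenvector_in_supp: "eigenvector A v k \<Longrightarrow> k \<noteq> 0 \<Longrightarrow> v \<in> supp A"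
  unfolding supp_def eigenvector_def
  by (rule cspanI[where vs="[v]" and c="\<lambda>_. 1"]) (auto simp: eigenvector_def)

lemma ptrace2_eq_ptrace1_if_swap_invariant:
  assumes "\<And>r c. r < n * n \<Longrightarrow> c < n * n \<Longrightarrow> \<rho> $$ (swap_index n r, swap_index n c) = \<rho> $$ (r, c)"
  shows "ptrace2 n n \<rho> = ptrace1 n n \<rho>"
proof (rule eq_matI)
  fix a c assume "a < dim_row (ptrace1 n n \<rho>)" and "c < dim_col (ptrace1 n n \<rho>)"
  then have a: "a < n" and c: "c < n" by (auto simp: ptrace1_def)
  have "\<rho> $$ (a * n + j, c * n + j) = \<rho> $$ (j * n + a, j * n + c)" if "j < n" for j
    using assms[of "a * n + j" "c * n + j"] swap_index_tensor a c that tensor_index_less by simp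
  then show "ptrace2 n n \<rho> $$ (a, c) = ptrace1 n n \<rho> $$ (a, c)"
    using a c by (simp add: ptrace1_def ptrace2_def)
qed (simp_all add: ptrace1_def ptrace2_def)

lemma swap_invariant_if_supp_eq_sym:
  assumes \<sigma>: "positive_op (n * n) \<sigma>" and supp: "supp \<sigma> \<subseteq> eq_sym n"
    and r: "r < n * n" and c: "c < n * n"
  shows "\<sigma> $$ (swap_index n r, swap_index n c) = \<sigma> $$ (r, c)"
proof -
  obtain ws k where ws: "orthonormal_list (n * n) ws"
    and ev: "\<And>i. i < n * n \<Longrightarrow> \<sigma> *\<^sub>v ws ! i = k i \<cdot>\<^sub>v ws ! i"
    and decomp: "\<sigma> = rank_one_sum (n * n) (n * n) k ((!) ws)"
    using positive_op_spectral_decomposition[OF \<sigma>] by metis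
  have sym: "ws ! i $ swap_index n s = ws ! i $ s" if i: "i < n * n" and "k i \<noteq> 0" and "s < n * n" for i s
  proof -
    have "ws ! i \<noteq> 0\<^sub>v (n * n)"
      using orthonormal_listD[OF ws i i] by auto
    then have "eigenvector \<sigma> (ws ! i) (k i)"
      unfolding eigenvector_def using \<sigma> ev[OF i] orthonormal_list_carrier[OF ws i]
      by (auto simp: positive_op_def)
    then have "ws ! i \<in> eq_sym n"
      using eigenvector_in_supp \<open>k i \<noteq> 0\<close> supp by blast
    then show ?thesis using \<open>s < n * n\<close> by (simp add: mem_eq_sym_iff)
  qed
  have summand: "k i * ws ! i $ swap_index n r * cnj (ws ! i $ swap_index n c)
      = k i * ws ! i $ r * cnj (ws ! i $ c)"
    if "i < n * n" for i
    using sym[OF that _ r] sym[OF that _ c] by (cases "k i = 0") auto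
  have "(\<Sum>i<n * n. k i * ws ! i $ swap_index n r * cnj (ws ! i $ swap_index n c))
      = (\<Sum>i<n * n. k i * ws ! i $ r * cnj (ws ! i $ c))"
    by (rule sum.cong) (simp_all add: summand)
  then show ?thesis
    using r c swap_index_less[OF r] swap_index_less[OF c] by (simp add: decomp rank_one_sum_def)
qed

lemma eq_if_lifting_eq_sym:
  assumes "lifting n n (eq_sym n) \<rho>1 \<rho>2"
  shows "\<rho>1 = \<rho>2"
proof -
  obtain \<sigma> where "pdo (n * n) \<sigma>" and coupling: "coupling n n \<sigma> \<rho>1 \<rho>2" and "supp \<sigma> \<subseteq> eq_sym n"
    using assms unfolding lifting_def by blast
  then have "ptrace2 n n \<sigma> = ptrace1 n n \<sigma>"
    by (intro ptrace2_eq_ptrace1_if_swap_invariant swap_invariant_if_supp_eq_sym) (auto simp: pdo_def)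
  then show ?thesis using coupling unfolding coupling_def by simp
qed

lemma lifting_mono: "X \<subseteq> Y \<Longrightarrow> lifting n1 n2 X \<rho>1 \<rho>2 \<Longrightarrow> lifting n1 n2 Y \<rho>1 \<rho>2"
  unfolding lifting_def by blast

theorem proposition3p8:
  fixes n :: nat and \<rho>1 \<rho>2 :: "complex mat"
  assumes "pdo n \<rho>1" and "pdo n \<rho>2"
  shows "(\<rho>1 = \<rho>2 \<longleftrightarrow> (\<exists>B. onb n B \<and> lifting n n (eq_basis n B) \<rho>1 \<rho>2))
       \<and> (\<rho>1 = \<rho>2 \<longleftrightarrow> lifting n n (eq_sym n) \<rho>1 \<rho>2)"
proof -
  have basis_sym: "lifting n n (eq_sym n) \<rho>1 \<rho>2" if "lifting n n (eq_basis n B) \<rho>1 \<rho>2" for B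
    using lifting_mono[OF eq_basis_subset_eq_sym that] .
  have eq_basis: "\<exists>B. onb n B \<and> lifting n n (eq_basis n B) \<rho>1 \<rho>2" if "\<rho>1 = \<rho>2"
    using lifting_eq_basis_self[OF assms(1)] that by simp
  show ?thesis
    using basis_sym eq_basis eq_if_lifting_eq_sym by blast
qed

end
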